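(* Let $n\ge d$, $L=\{\ell_1,\dots,\ell_n\}$, $R=\{r_1,\dots,r_d\}$, let $\mathcal{M}=(M_\sigma)$ be a linkage $(n,d)$-matching field and let $\sigma,\sigma'$ be two $d$-element subsets of $L$. If there are subsets $P\subseteq\sigma\cap\sigma'$ and $Q\subseteq R$ with $|P|=|Q|$ such that the restrictions $M_\sigma|_{P\sqcup Q}$ and $M_{\sigma'}|_{P\sqcup Q}$ (induced subgraphs on $P\sqcup Q$) are perfect matchings, then these matchings agree.
   Context: An $(n,d)$-matching field $\mathcal{M}=(M_\sigma)$ assigns to each $d$-subset $\sigma\subseteq L$ a perfect matching $M_\sigma$ between $\sigma$ and $R$. It is linkage if for every $r_i\in R$ and every $(d+1)$-subset $\tau\subseteq L$ there exist distinct $\ell_j,\ell_{j'}\in\tau$ such that $M_{\tau\setminus\{\ell_j\}}$ and $M_{\tau\setminus\{\ell_{j'}\}}$ agree everywhere except on the edges incident with $r_i$. *)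

theory Defs
  imports Main
begin

definition perfect_matching :: "('a \<times> 'b) set \<Rightarrow> 'a set \<Rightarrow> 'b set \<Rightarrow> bool" where
  "perfect_matching M A B \<longleftrightarrow>
     M \<subseteq> A \<times> B \<and>
     (\<forall>a\<in>A. \<exists>!b. (a, b) \<in> M) \<and>
     (\<forall>b\<in>B. \<exists>!a. (a, b) \<in> M)"

definition restrict_graph :: "('a \<times> 'b) set \<Rightarrow> 'a set \<Rightarrow> 'b set \<Rightarrow> ('a \<times> 'b) set" where
  "restrict_graph M P Q = M \<inter> (P \<times> Q)"

definition matching_field :: "'a set \<Rightarrow> 'b set \<Rightarrow> ('a set \<Rightarrow> ('a \<times> 'b) set) \<Rightarrow> bool" where
  "matching_field L R M \<longleftrightarrow>
     (\<forall>\<sigma>. \<sigma> \<subseteq> L \<and> card \<sigma> = card R \<longrightarrow> perfect_matching (M \<sigma>) \<sigma> R)"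

definition edges_avoiding :: "('a \<times> 'b) set \<Rightarrow> 'b \<Rightarrow> ('a \<times> 'b) set" where
  "edges_avoiding M r = {e \<in> M. snd e \<noteq> r}"

definition linkage_matching_field :: "'a set \<Rightarrow> 'b set \<Rightarrow> ('a set \<Rightarrow> ('a \<times> 'b) set) \<Rightarrow> bool" where
  "linkage_matching_field L R M \<longleftrightarrow>
     matching_field L R M \<and>
     (\<forall>r\<in>R. \<forall>\<tau>. \<tau> \<subseteq> L \<and> card \<tau> = card R + 1 \<longrightarrow>
        (\<exists>l\<in>\<tau>. \<exists>l'\<in>\<tau>. l \<noteq> l' \<and>
           edges_avoiding (M (\<tau> - {l})) r = edges_avoiding (M (\<tau> - {l'})) r))"

end

theory Submission
  imports Defs
begin

text \<open>Fix a (d+1)-set \<open>\<tau>\<close> and call \<open>x, y \<in> \<tau>\<close> linked when the matchings of \<open>\<tau> - x\<close> and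
  \<open>\<tau> - y\<close> differ only at one right vertex. Linkage provides a linked pair for every right
  vertex, and counting right vertices component by component shows that the linked graph on
  \<open>\<tau>\<close> is connected. For \<open>b \<in> \<sigma>' - \<sigma>\<close> and \<open>\<tau> = \<sigma> + b\<close>, walking in it from \<open>b\<close> into
  \<open>\<sigma> - \<sigma>'\<close> and inducting on \<open>|\<sigma> - \<sigma>'|\<close> gives an exchange: \<open>a \<in> \<sigma> - \<sigma>'\<close> and \<open>w \<in> \<sigma>'\<close>
  such that the matching of \<open>\<sigma>' - w + a\<close> agrees with \<open>M\<^sub>\<sigma>\<close> at \<open>a\<close> and with \<open>M\<^sub>\<sigma>\<^sub>'\<close> on
  \<open>\<sigma>' - w\<close>. Then \<open>a\<close> takes over the partner of \<open>w\<close>; so if \<open>M\<^sub>\<sigma>\<close> and \<open>M\<^sub>\<sigma>\<^sub>'\<close> match \<open>P\<close> onto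
  the same set, \<open>w \<notin> P\<close> and \<open>P + a\<close> satisfies the same hypothesis for \<open>\<sigma>\<close> and \<open>\<sigma>' - w + a\<close>.
  Induction on \<open>d - |P|\<close> concludes.\<close>

definition partner :: "('a \<times> 'b) set \<Rightarrow> 'a \<Rightarrow> 'b" where
  "partner M x = (THE y. (x, y) \<in> M)"

lemma perfect_matching_partner_iff:
  assumes "perfect_matching M A B"
  shows "(x, y) \<in> M \<longleftrightarrow> x \<in> A \<and> partner M x = y"
proof -
  have left: "x \<in> A" if "(x, y) \<in> M"
    using assms that unfolding perfect_matching_def by blast
  have unique: "\<exists>!y. (x, y) \<in> M" if "x \<in> A"
    using assms that unfolding perfect_matching_def by blast
  show ?thesis
  proof
    assume "(x, y) \<in> M"
    then show "x \<in> A \<and> partner M x = y"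
      unfolding partner_def by (simp add: left the1_equality[OF unique])
  next
    assume "x \<in> A \<and> partner M x = y"
    then show "(x, y) \<in> M"
      unfolding partner_def using theI'[OF unique] by blast
  qed
qed

lemma perfect_matching_bij_betw_partner:
  assumes "perfect_matching M A B"
  shows "bij_betw (partner M) A B"
proof (rule bij_betw_imageI)
  note edge_iff = perfect_matching_partner_iff[OF assms]
  show "inj_on (partner M) A"
  proof (rule inj_onI)
    fix x x' assume "x \<in> A" "x' \<in> A" "partner M x = partner M x'"
    then have "(x, partner M x) \<in> M" "(x', partner M x) \<in> M"
      using edge_iff by auto
    moreover have "partner M x \<in> B"
      using \<open>(x, partner M x) \<in> M\<close> assms unfolding perfect_matching_def by blast
    ultimately show "x = x'"
      using assms unfolding perfect_matching_def by blast
  qed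
  have "partner M x \<in> B" if "x \<in> A" for x
    using that edge_iff assms unfolding perfect_matching_def by blast
  moreover have "\<exists>x. (x, y) \<in> M" if "y \<in> B" for y
    using that assms unfolding perfect_matching_def by blast
  ultimately show "partner M ` A = B"
    using edge_iff by (force simp: image_iff)
qed

lemma restrict_graph_perfect_matching_iff:
  assumes "perfect_matching M A B" and "P \<subseteq> A"
  shows "(p, q) \<in> restrict_graph M P Q \<longleftrightarrow> p \<in> P \<and> q \<in> Q \<and> partner M p = q"
  using assms(2) perfect_matching_partner_iff[OF assms(1)]
  unfolding restrict_graph_def by blast

lemma partner_image_eq_if_restrict_perfect_matching:
  assumes "perfect_matching M A B" and "P \<subseteq> A"
    and pm_PQ: "perfect_matching (restrict_graph M P Q) P Q"
  shows "partner M ` P = Q"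
proof -
  note edge_iff = restrict_graph_perfect_matching_iff[OF assms(1,2)]
  have "\<exists>q. (p, q) \<in> restrict_graph M P Q" if "p \<in> P" for p
    using pm_PQ that unfolding perfect_matching_def by blast
  moreover have "\<exists>p. (p, q) \<in> restrict_graph M P Q" if "q \<in> Q" for q
    using pm_PQ that unfolding perfect_matching_def by blast
  ultimately show ?thesis
    using edge_iff by (force simp: image_iff)
qed

lemma partner_eq_if_edges_avoiding_eq:
  assumes "perfect_matching M A B" and "perfect_matching M' A' B"
    and "edges_avoiding M r = edges_avoiding M' r"
    and "x \<in> A" and "partner M x \<noteq> r"
  shows "x \<in> A'" and "partner M' x = partner M x"
proof -
  have "(x, partner M x) \<in> edges_avoiding M r"
    using assms(4,5) perfect_matching_partner_iff[OF assms(1)]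
    unfolding edges_avoiding_def by simp
  then have "(x, partner M x) \<in> M'"
    using assms(3) unfolding edges_avoiding_def by blast
  then show "x \<in> A'" and "partner M' x = partner M x"
    using perfect_matching_partner_iff[OF assms(2)] by blast+
qed

lemma partner_exchange_if_edges_avoiding_eq:
  assumes pm: "perfect_matching M (insert l' S) B" and pm': "perfect_matching M' (insert l S) B"
    and "l \<notin> S" and "l' \<notin> S" and "l \<noteq> l'"
    and eq: "edges_avoiding M r = edges_avoiding M' r"
  shows "partner M l' = r" and "partner M' l = r" and "\<forall>v\<in>S. partner M v = partner M' v"
proof -
  show M_l': "partner M l' = r"
    using partner_eq_if_edges_avoiding_eq(1)[OF pm pm' eq] assms(3-5) by blast
  show "partner M' l = r"
    using partner_eq_if_edges_avoiding_eq(1)[OF pm' pm eq[symmetric]] assms(3-5) by blast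
  have inj: "inj_on (partner M) (insert l' S)"
    using bij_betw_imp_inj_on[OF perfect_matching_bij_betw_partner[OF pm]] .
  show "\<forall>v\<in>S. partner M v = partner M' v"
  proof
    fix v assume "v \<in> S"
    with assms(4) have "partner M v \<noteq> partner M l'"
      using inj_onD[OF inj] by blast
    then show "partner M v = partner M' v"
      using partner_eq_if_edges_avoiding_eq(2)[OF pm pm' eq] \<open>v \<in> S\<close> M_l' by simp
  qed
qed

lemma bij_betw_insert_eq_if_eq_on:
  assumes f: "bij_betw f (insert a S) B" and g: "bij_betw g (insert b S) B"
    and "a \<notin> S" and "b \<notin> S" and eq: "\<forall>x\<in>S. f x = g x"
  shows "f a = g b"
proof -
  have "f ` S = g ` S"
    by (rule image_cong[OF refl]) (use eq in blast)
  have "f a \<in> B - f ` S"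
    using bij_betw_apply[OF f] bij_betw_imp_inj_on[OF f] \<open>a \<notin> S\<close> by (simp add: inj_on_image_mem_iff)
  also have "B - f ` S = {g b}"
    using bij_betw_imp_surj_on[OF g] bij_betw_imp_inj_on[OF g] \<open>b \<notin> S\<close> \<open>f ` S = g ` S\<close>
    by (auto simp: inj_on_image_mem_iff)
  finally show ?thesis
    by simp
qed

locale linkage_field =
  fixes L :: "'a set" and R :: "'b set" and M :: "'a set \<Rightarrow> ('a \<times> 'b) set"
  assumes finite_L: "finite L" and linkage: "linkage_matching_field L R M"
begin

definition admissible :: "'a set \<Rightarrow> bool" where
  "admissible \<sigma> \<longleftrightarrow> \<sigma> \<subseteq> L \<and> card \<sigma> = card R"

abbreviation match :: "'a set \<Rightarrow> 'a \<Rightarrow> 'b" where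
  "match \<sigma> \<equiv> partner (M \<sigma>)"

lemma perfect_matching_M: "admissible \<sigma> \<Longrightarrow> perfect_matching (M \<sigma>) \<sigma> R"
  using linkage unfolding linkage_matching_field_def matching_field_def admissible_def by blast

lemma bij_betw_match: "admissible \<sigma> \<Longrightarrow> bij_betw (match \<sigma>) \<sigma> R"
  by (rule perfect_matching_bij_betw_partner[OF perfect_matching_M])

lemma finite_admissible: "admissible \<sigma> \<Longrightarrow> finite \<sigma>"
  using finite_L finite_subset unfolding admissible_def by blast

lemma admissible_exchange:
  assumes "admissible \<sigma>" and "a \<in> L - \<sigma>" and "w \<in> \<sigma>"
  shows "admissible (insert a (\<sigma> - {w}))"
  using assms finite_admissible[OF assms(1)] card_gt_0_iff[of \<sigma>]
  unfolding admissible_def by auto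

lemma admissible_Diff_singleton:
  assumes "\<tau> \<subseteq> L" and "card \<tau> = Suc (card R)" and "x \<in> \<tau>"
  shows "admissible (\<tau> - {x})"
  using assms finite_subset[OF assms(1) finite_L] unfolding admissible_def by auto

lemma ex_linkage_pair:
  assumes "\<tau> \<subseteq> L" and "card \<tau> = Suc (card R)" and "r \<in> R"
  obtains l l' where "l \<in> \<tau>" and "l' \<in> \<tau>" and "l \<noteq> l'"
    and "match (\<tau> - {l}) l' = r" and "match (\<tau> - {l'}) l = r"
    and "\<forall>v\<in>\<tau> - {l, l'}. match (\<tau> - {l}) v = match (\<tau> - {l'}) v"
proof -
  obtain l l' where "l \<in> \<tau>" "l' \<in> \<tau>" "l \<noteq> l'"
    and eq: "edges_avoiding (M (\<tau> - {l})) r = edges_avoiding (M (\<tau> - {l'})) r"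
    using linkage assms unfolding linkage_matching_field_def by (metis Suc_eq_plus1)
  have "\<tau> - {l} = insert l' (\<tau> - {l, l'})" and "\<tau> - {l'} = insert l (\<tau> - {l, l'})"
    using \<open>l \<in> \<tau>\<close> \<open>l' \<in> \<tau>\<close> \<open>l \<noteq> l'\<close> by auto
  then have "perfect_matching (M (\<tau> - {l})) (insert l' (\<tau> - {l, l'})) R"
    and "perfect_matching (M (\<tau> - {l'})) (insert l (\<tau> - {l, l'})) R"
    using perfect_matching_M[OF admissible_Diff_singleton[OF assms(1,2)]] \<open>l \<in> \<tau>\<close> \<open>l' \<in> \<tau>\<close>
    by metis+
  from partner_exchange_if_edges_avoiding_eq[OF this _ _ \<open>l \<noteq> l'\<close> eq]
  show ?thesis
    using that \<open>l \<in> \<tau>\<close> \<open>l' \<in> \<tau>\<close> \<open>l \<noteq> l'\<close> by blast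
qed

end

locale linkage_field_tau = linkage_field +
  fixes \<tau> :: "'a set"
  assumes tau_subset: "\<tau> \<subseteq> L" and card_tau: "card \<tau> = Suc (card R)"
begin

abbreviation omit :: "'a \<Rightarrow> 'a \<Rightarrow> 'b" where
  "omit x \<equiv> match (\<tau> - {x})"

lemma finite_tau: "finite \<tau>"
  using finite_subset[OF tau_subset finite_L] .

lemma bij_betw_omit: "x \<in> \<tau> \<Longrightarrow> bij_betw (omit x) (\<tau> - {x}) R"
  using bij_betw_match[OF admissible_Diff_singleton[OF tau_subset card_tau]] .

definition linked :: "'a \<Rightarrow> 'a \<Rightarrow> bool" where
  "linked x y \<longleftrightarrow> x \<in> \<tau> \<and> y \<in> \<tau> \<and> x \<noteq> y \<and> omit x y = omit y x \<and>
     (\<forall>v\<in>\<tau> - {x, y}. omit x v = omit y v)"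

lemma linked_sym: "linked x y \<Longrightarrow> linked y x"
  unfolding linked_def by (auto simp: insert_commute)

lemma linked_in_tau: "linked x y \<Longrightarrow> x \<in> \<tau> \<and> y \<in> \<tau>"
  unfolding linked_def by blast

lemma linked_omit_eq: "linked x y \<Longrightarrow> v \<in> \<tau> \<Longrightarrow> v \<noteq> x \<Longrightarrow> v \<noteq> y \<Longrightarrow> omit x v = omit y v"
  unfolding linked_def by blast

lemma rtranclp_linked_sym: "linked\<^sup>*\<^sup>* x y \<Longrightarrow> linked\<^sup>*\<^sup>* y x"
  using sympD[OF symp_rtranclp[OF sympI[OF linked_sym]]] .

lemma rtranclp_linked_in_tau: "linked\<^sup>*\<^sup>* x y \<Longrightarrow> x \<in> \<tau> \<Longrightarrow> y \<in> \<tau>"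
  by (induction rule: rtranclp_induct) (auto dest: linked_in_tau)

lemma ex_linked_labelled:
  assumes "r \<in> R"
  obtains l l' where "linked l l'" and "omit l l' = r"
  using ex_linkage_pair[OF tau_subset card_tau assms] unfolding linked_def by metis

lemma omit_eq_outside_component:
  assumes "linked\<^sup>*\<^sup>* x y" and "v \<in> \<tau>" and "\<not> linked\<^sup>*\<^sup>* x v"
  shows "omit x v = omit y v"
  using assms(1)
proof (induction rule: rtranclp_induct)
  case (step y z)
  then have "v \<noteq> y" and "v \<noteq> z"
    using assms(3) by (auto intro: rtranclp.rtrancl_into_rtrancl)
  then show ?case
    using step linked_omit_eq[OF step.hyps(2) assms(2)] by simp
qed simp

lemma ex_omit_label_in_component:
  assumes "linked l l'" and "linked\<^sup>*\<^sup>* b l" and "b \<in> \<tau>"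
  obtains h where "h \<in> \<tau> - {b}" and "linked\<^sup>*\<^sup>* b h" and "omit b h = omit l l'"
proof -
  have "l \<in> \<tau>" and "l' \<in> \<tau> - {l}"
    using assms(1) linked_in_tau unfolding linked_def by auto
  then have "omit l l' \<in> R"
    using bij_betw_apply[OF bij_betw_omit] by blast
  then obtain h where h: "h \<in> \<tau> - {b}" "omit b h = omit l l'"
    using bij_betw_imp_surj_on[OF bij_betw_omit[OF assms(3)]] by (metis imageE)
  have "linked\<^sup>*\<^sup>* b h"
  proof (rule ccontr)
    assume not_reached: "\<not> linked\<^sup>*\<^sup>* b h"
    then have "h \<noteq> l"
      using assms(2) by blast
    moreover have "omit l h = omit l l'"
      using h omit_eq_outside_component[OF assms(2) _ not_reached] by simp
    ultimately have "h = l'"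
      using h(1) \<open>l' \<in> \<tau> - {l}\<close> inj_onD[OF bij_betw_imp_inj_on[OF bij_betw_omit[OF \<open>l \<in> \<tau>\<close>]]]
      by blast
    then show False
      using not_reached assms(1,2) by (meson rtranclp.rtrancl_into_rtrancl)
  qed
  with h that show ?thesis by blast
qed

lemma card_le_non_representatives:
  assumes rep_reached: "\<And>z. linked\<^sup>*\<^sup>* z (rep z)"
    and rep_eq: "\<And>z z'. linked\<^sup>*\<^sup>* z z' \<Longrightarrow> rep z = rep z'"
  shows "card R \<le> card {h \<in> \<tau>. h \<noteq> rep h}"
proof -
  define H where "H = {h \<in> \<tau>. h \<noteq> rep h}"
  have covers: "R \<subseteq> (\<lambda>h. omit (rep h) h) ` H"
  proof
    fix r assume "r \<in> R"
    then obtain l l' where "linked l l'" and "omit l l' = r"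
      by (rule ex_linked_labelled)
    moreover have "linked\<^sup>*\<^sup>* (rep l) l" and "rep l \<in> \<tau>"
      using rep_reached[of l] rtranclp_linked_sym rtranclp_linked_in_tau linked_in_tau
        \<open>linked l l'\<close> by blast+
    ultimately obtain h where "h \<in> \<tau> - {rep l}" and "linked\<^sup>*\<^sup>* (rep l) h" and "omit (rep l) h = r"
      by (metis ex_omit_label_in_component)
    moreover from this have "rep h = rep l"
      using rep_eq rep_reached by metis
    ultimately show "r \<in> (\<lambda>h. omit (rep h) h) ` H"
      unfolding H_def by (metis (mono_tags, lifting) Diff_iff image_eqI insertCI mem_Collect_eq)
  qed
  have "finite H"
    unfolding H_def using finite_tau by simp
  have "card R \<le> card ((\<lambda>h. omit (rep h) h) ` H)"
    using covers \<open>finite H\<close> by (simp add: card_mono)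
  also have "\<dots> \<le> card H"
    using \<open>finite H\<close> by (rule card_image_le)
  finally show ?thesis
    unfolding H_def .
qed

lemma linked_connected:
  assumes "x \<in> \<tau>" and "y \<in> \<tau>"
  shows "linked\<^sup>*\<^sup>* x y"
proof (rule ccontr)
  assume disconnected: "\<not> linked\<^sup>*\<^sup>* x y"
  define rep where "rep z = (SOME z'. linked\<^sup>*\<^sup>* z z')" for z
  have rep_reached: "linked\<^sup>*\<^sup>* z (rep z)" for z
    unfolding rep_def by (rule someI[of _ z]) simp
  have rep_eq: "rep z = rep z'" if "linked\<^sup>*\<^sup>* z z'" for z z'
  proof -
    have "linked\<^sup>*\<^sup>* z = linked\<^sup>*\<^sup>* z'"
      using that rtranclp_linked_sym by (fastforce intro: rtranclp_trans)
    then show ?thesis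
      unfolding rep_def by simp
  qed
  have "rep x \<noteq> rep y"
    using disconnected rep_reached[of x] rep_reached[of y] rtranclp_linked_sym
    by (metis rtranclp_trans)
  moreover have "rep x \<in> \<tau>" and "rep y \<in> \<tau>"
    using assms rep_reached rtranclp_linked_in_tau by blast+
  ultimately have two_reps: "card {rep x, rep y} = 2" "{rep x, rep y} \<subseteq> \<tau>"
    by auto
  have "card R \<le> card {h \<in> \<tau>. h \<noteq> rep h}"
    using card_le_non_representatives rep_reached rep_eq by blast
  also have "\<dots> \<le> card (\<tau> - {rep x, rep y})"
    using finite_tau rep_eq[OF rep_reached] by (auto intro: card_mono)
  also have "\<dots> = card \<tau> - 2"
    using two_reps finite_tau by (simp add: card_Diff_subset)
  finally have "card R \<le> card \<tau> - 2" .
  moreover have "2 \<le> card \<tau>"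
    using two_reps finite_tau by (metis card_mono)
  ultimately show False
    using card_tau by linarith
qed

lemma ex_linked_entry:
  assumes "b \<in> \<tau>" and "A \<subseteq> \<tau>" and "b \<notin> A" and "A \<noteq> {}"
  obtains u a where "u \<notin> A" and "a \<in> A" and "linked u a" and "\<forall>v\<in>A. omit u v = omit b v"
proof -
  have "\<exists>u a. u \<notin> A \<and> a \<in> A \<and> linked u a \<and> (\<forall>v\<in>A. omit u v = omit b v)"
  proof (rule ccontr)
    assume no_entry: "\<not> ?thesis"
    have outside: "y \<notin> A \<and> (\<forall>v\<in>A. omit y v = omit b v)" if "linked\<^sup>*\<^sup>* b y" for y
      using that
    proof (induction rule: rtranclp_induct)
      case base
      then show ?case using assms(3) by simp
    next
      case (step y z)
      then have "z \<notin> A"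
        using no_entry by blast
      then have "\<forall>v\<in>A. omit z v = omit y v"
        using linked_omit_eq[OF step.hyps(2)] assms(2) step.IH by (metis subsetD)
      with \<open>z \<notin> A\<close> step.IH show ?case
        by simp
    qed
    obtain a where "a \<in> A"
      using assms(4) by blast
    moreover have "linked\<^sup>*\<^sup>* b a"
      using linked_connected assms(1,2) \<open>a \<in> A\<close> by blast
    ultimately show False
      using outside by blast
  qed
  then show ?thesis
    using that by blast
qed

lemma ex_omit_eq_on_others:
  assumes "b \<in> \<tau>" and "A \<subseteq> \<tau>" and "b \<notin> A" and "A \<noteq> {}"
  obtains a where "a \<in> A" and "\<forall>v\<in>A - {a}. omit a v = omit b v"
proof -
  obtain u a where "u \<notin> A" "a \<in> A" "linked u a" "\<forall>v\<in>A. omit u v = omit b v"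
    using ex_linked_entry[OF assms] .
  have "\<forall>v\<in>A - {a}. omit a v = omit b v"
  proof
    fix v assume "v \<in> A - {a}"
    then have "omit u v = omit a v"
      using linked_omit_eq[OF \<open>linked u a\<close>] assms(2) \<open>u \<notin> A\<close> by auto
    with \<open>v \<in> A - {a}\<close> \<open>\<forall>v\<in>A. omit u v = omit b v\<close> show "omit a v = omit b v"
      by (metis DiffD1)
  qed
  with \<open>a \<in> A\<close> that show ?thesis by blast
qed

lemma ex_linked_with_omit_eq:
  assumes "a \<in> \<tau>" and "b \<in> \<tau>" and "a \<noteq> b"
  obtains u where "u \<in> \<tau> - {a}" and "omit u a = omit b a"
    and "\<forall>v\<in>\<tau> - {a, u}. omit u v = omit a v"
proof -
  obtain u where "linked u a" and "omit u a = omit b a"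
    using ex_linked_entry[of b "{a}"] assms by auto
  then show ?thesis
    using that linked_in_tau linked_omit_eq unfolding linked_def by blast
qed

end

context linkage_field
begin

lemma linkage_field_tauI: "\<tau> \<subseteq> L \<Longrightarrow> card \<tau> = Suc (card R) \<Longrightarrow> linkage_field_tau L R M \<tau>"
  by (intro linkage_field_tau.intro linkage_field_axioms) (unfold_locales)

lemma admissible_eq_if_subset:
  assumes "admissible \<sigma>" and "admissible \<sigma>'" and "\<sigma> \<subseteq> \<sigma>'"
  shows "\<sigma> = \<sigma>'"
  using assms card_subset_eq[OF finite_admissible[OF assms(2)]] unfolding admissible_def by simp

lemma ex_exchange:
  assumes "admissible \<sigma>" and "admissible \<sigma>'" and "\<sigma> \<noteq> \<sigma>'"
  shows "\<exists>a\<in>\<sigma> - \<sigma>'. \<exists>w\<in>\<sigma>'. match (insert a (\<sigma>' - {w})) a = match \<sigma> a \<and>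
           (\<forall>v\<in>\<sigma>' - {w}. match (insert a (\<sigma>' - {w})) v = match \<sigma>' v)"
  using assms
proof (induction "card (\<sigma> - \<sigma>')" arbitrary: \<sigma> rule: less_induct)
  case less
  have "\<sigma> - \<sigma>' \<noteq> {}" and "\<sigma>' - \<sigma> \<noteq> {}"
    using admissible_eq_if_subset less.prems by blast+
  then obtain b where "b \<in> \<sigma>'" and "b \<notin> \<sigma>"
    by blast
  define \<tau> where "\<tau> = insert b \<sigma>"
  have "\<tau> \<subseteq> L" and "card \<tau> = Suc (card R)"
    using less.prems(1,2) finite_admissible[OF less.prems(1)] \<open>b \<in> \<sigma>'\<close> \<open>b \<notin> \<sigma>\<close>
    unfolding \<tau>_def admissible_def by auto
  interpret linkage_field_tau L R M \<tau>
    using linkage_field_tauI[OF \<open>\<tau> \<subseteq> L\<close> \<open>card \<tau> = Suc (card R)\<close>] .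
  have omit_b: "omit b = match \<sigma>"
    using \<open>b \<notin> \<sigma>\<close> unfolding \<tau>_def by simp
  obtain a where "a \<in> \<sigma> - \<sigma>'" and root: "\<forall>v\<in>(\<sigma> - \<sigma>') - {a}. omit a v = match \<sigma> v"
    using ex_omit_eq_on_others[of b "\<sigma> - \<sigma>'"] \<open>\<sigma> - \<sigma>' \<noteq> {}\<close> \<open>b \<in> \<sigma>'\<close> omit_b unfolding \<tau>_def by auto
  then have "a \<in> \<tau>" and "b \<in> \<tau>" and "a \<noteq> b"
    using \<open>b \<in> \<sigma>'\<close> unfolding \<tau>_def by auto
  show ?case
  proof (cases "\<tau> - {a} = \<sigma>'")
    case True
    obtain u where "u \<in> \<tau> - {a}" and "omit u a = omit b a"
      and "\<forall>v\<in>\<tau> - {a, u}. omit u v = omit a v"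
      using ex_linked_with_omit_eq[OF \<open>a \<in> \<tau>\<close> \<open>b \<in> \<tau>\<close> \<open>a \<noteq> b\<close>] .
    moreover have "u \<in> \<sigma>'" and "\<tau> - {u} = insert a (\<sigma>' - {u})" and "\<sigma>' - {u} = \<tau> - {a, u}"
      using True \<open>a \<in> \<tau>\<close> \<open>u \<in> \<tau> - {a}\<close> by auto
    ultimately show ?thesis
      using \<open>a \<in> \<sigma> - \<sigma>'\<close> omit_b True by metis
  next
    case False
    have "admissible (\<tau> - {a})"
      using admissible_Diff_singleton[OF \<open>\<tau> \<subseteq> L\<close> \<open>card \<tau> = Suc (card R)\<close> \<open>a \<in> \<tau>\<close>] .
    moreover have smaller: "(\<tau> - {a}) - \<sigma>' = (\<sigma> - \<sigma>') - {a}"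
      using \<open>b \<in> \<sigma>'\<close> unfolding \<tau>_def by auto
    then have "card ((\<tau> - {a}) - \<sigma>') < card (\<sigma> - \<sigma>')"
      using card_Diff1_less[OF _ \<open>a \<in> \<sigma> - \<sigma>'\<close>] finite_admissible[OF less.prems(1)] by simp
    ultimately obtain a' w where "a' \<in> (\<tau> - {a}) - \<sigma>'" and "w \<in> \<sigma>'"
      and "match (insert a' (\<sigma>' - {w})) a' = omit a a'"
      and "\<forall>v\<in>\<sigma>' - {w}. match (insert a' (\<sigma>' - {w})) v = match \<sigma>' v"
      using less.hyps less.prems(2) False by blast
    moreover have "a' \<in> \<sigma> - \<sigma>'" and "omit a a' = match \<sigma> a'"
      using \<open>a' \<in> (\<tau> - {a}) - \<sigma>'\<close> root unfolding smaller by auto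
    ultimately show ?thesis
      by metis
  qed
qed

lemma match_exchange_takes_over:
  assumes "admissible \<sigma>'" and "a \<in> L - \<sigma>'" and "w \<in> \<sigma>'"
    and "\<forall>v\<in>\<sigma>' - {w}. match (insert a (\<sigma>' - {w})) v = match \<sigma>' v"
  shows "match (insert a (\<sigma>' - {w})) a = match \<sigma>' w"
proof -
  have "bij_betw (match (insert a (\<sigma>' - {w}))) (insert a (\<sigma>' - {w})) R"
    using bij_betw_match[OF admissible_exchange[OF assms(1-3)]] .
  moreover have "bij_betw (match \<sigma>') (insert w (\<sigma>' - {w})) R"
    using bij_betw_match[OF assms(1)] assms(3) by (simp add: insert_absorb)
  ultimately show ?thesis
    using bij_betw_insert_eq_if_eq_on[OF _ _ _ _ assms(4)] assms(2) by simp
qed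

lemma ex_exchange_extending:
  assumes "admissible \<sigma>" and "admissible \<sigma>'" and "\<sigma> \<noteq> \<sigma>'"
    and P: "P \<subseteq> \<sigma> \<inter> \<sigma>'" and image_eq: "match \<sigma> ` P = match \<sigma>' ` P"
  obtains a \<rho> where "admissible \<rho>" and "a \<in> \<sigma> - P" and "insert a P \<subseteq> \<sigma> \<inter> \<rho>"
    and "match \<sigma> ` insert a P = match \<rho> ` insert a P" and "\<forall>p\<in>P. match \<rho> p = match \<sigma>' p"
proof -
  obtain a w where "a \<in> \<sigma> - \<sigma>'" and "w \<in> \<sigma>'"
    and a_kept: "match (insert a (\<sigma>' - {w})) a = match \<sigma> a"
    and others_kept: "\<forall>v\<in>\<sigma>' - {w}. match (insert a (\<sigma>' - {w})) v = match \<sigma>' v"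
    using ex_exchange assms(1-3) by blast
  define \<rho> where "\<rho> = insert a (\<sigma>' - {w})"
  have "a \<in> L - \<sigma>'"
    using assms(1) \<open>a \<in> \<sigma> - \<sigma>'\<close> unfolding admissible_def by auto
  then have "admissible \<rho>"
    unfolding \<rho>_def using admissible_exchange assms(2) \<open>w \<in> \<sigma>'\<close> by blast
  have "w \<notin> P"
  proof
    assume "w \<in> P"
    then have "match \<sigma> a \<in> match \<sigma> ` P"
      using match_exchange_takes_over[OF assms(2) \<open>a \<in> L - \<sigma>'\<close> \<open>w \<in> \<sigma>'\<close> others_kept]
        a_kept image_eq by simp
    then have "a \<in> P"
      using bij_betw_imp_inj_on[OF bij_betw_match[OF assms(1)]] P \<open>a \<in> \<sigma> - \<sigma>'\<close>
      by (auto simp: inj_on_image_mem_iff)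
    with P \<open>a \<in> \<sigma> - \<sigma>'\<close> show False
      by blast
  qed
  have "\<forall>p\<in>P. match \<rho> p = match \<sigma>' p"
    using others_kept P \<open>w \<notin> P\<close> unfolding \<rho>_def by auto
  moreover from this have "match \<rho> ` P = match \<sigma>' ` P"
    by (simp cong: image_cong)
  then have "match \<sigma> ` insert a P = match \<rho> ` insert a P"
    using a_kept image_eq unfolding \<rho>_def by simp
  moreover have "a \<in> \<sigma> - P" and "insert a P \<subseteq> \<sigma> \<inter> \<rho>"
    using P \<open>a \<in> \<sigma> - \<sigma>'\<close> \<open>w \<notin> P\<close> unfolding \<rho>_def by auto
  ultimately show ?thesis
    using that \<open>admissible \<rho>\<close> by blast
qed

lemma match_eq_if_match_image_eq:
  assumes "admissible \<sigma>" and "admissible \<sigma>'" and "P \<subseteq> \<sigma> \<inter> \<sigma>'"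
    and "match \<sigma> ` P = match \<sigma>' ` P" and "p \<in> P"
  shows "match \<sigma> p = match \<sigma>' p"
  using assms
proof (induction "card R - card P" arbitrary: P \<sigma>' rule: less_induct)
  case less
  show ?case
  proof (cases "\<sigma> = \<sigma>'")
    case False
    obtain a \<rho> where "admissible \<rho>" and "a \<in> \<sigma> - P" and "insert a P \<subseteq> \<sigma> \<inter> \<rho>"
      and "match \<sigma> ` insert a P = match \<rho> ` insert a P"
      and \<rho>_agrees: "\<forall>p\<in>P. match \<rho> p = match \<sigma>' p"
      by (rule ex_exchange_extending[OF less.prems(1,2) False less.prems(3,4)])
    have "card R - card (insert a P) < card R - card P"
    proof -
      have "finite \<sigma>" and "insert a P \<subseteq> \<sigma>"
        using finite_admissible[OF less.prems(1)] \<open>insert a P \<subseteq> \<sigma> \<inter> \<rho>\<close> by auto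
      then have "card (insert a P) \<le> card R" and "finite P"
        using card_mono[of \<sigma> "insert a P"] finite_subset[of P \<sigma>] less.prems(1)
        unfolding admissible_def by auto
      with \<open>a \<in> \<sigma> - P\<close> show ?thesis
        by simp
    qed
    from less.hyps[OF this less.prems(1) \<open>admissible \<rho>\<close> \<open>insert a P \<subseteq> \<sigma> \<inter> \<rho>\<close>
        \<open>match \<sigma> ` insert a P = match \<rho> ` insert a P\<close>]
    have "match \<sigma> p = match \<rho> p"
      using less.prems(5) by simp
    with \<rho>_agrees less.prems(5) show ?thesis
      by simp
  qed simp
qed

end

theorem proposition3p5:
  fixes L :: "'a set" and R :: "'b set" and M :: "'a set \<Rightarrow> ('a \<times> 'b) set"
    and \<sigma> \<sigma>' P :: "'a set" and Q :: "'b set"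
  assumes "finite L" and "finite R" and "card R \<le> card L"
    and "linkage_matching_field L R M"
    and "\<sigma> \<subseteq> L" and "card \<sigma> = card R"
    and "\<sigma>' \<subseteq> L" and "card \<sigma>' = card R"
    and "P \<subseteq> \<sigma> \<inter> \<sigma>'" and "Q \<subseteq> R" and "card P = card Q"
    and "perfect_matching (restrict_graph (M \<sigma>) P Q) P Q"
    and "perfect_matching (restrict_graph (M \<sigma>') P Q) P Q"
  shows "restrict_graph (M \<sigma>) P Q = restrict_graph (M \<sigma>') P Q"
proof -
  interpret linkage_field L R M
    using assms(1,4) by unfold_locales
  have "admissible \<sigma>" and "admissible \<sigma>'"
    using assms(5-8) unfolding admissible_def by auto
  note pm = perfect_matching_M[OF \<open>admissible \<sigma>\<close>] perfect_matching_M[OF \<open>admissible \<sigma>'\<close>]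
  have "match \<sigma> ` P = Q" and "match \<sigma>' ` P = Q"
    using partner_image_eq_if_restrict_perfect_matching pm assms(9,12,13) by (meson le_infE)+
  then have "match \<sigma> p = match \<sigma>' p" if "p \<in> P" for p
    using match_eq_if_match_image_eq[OF \<open>admissible \<sigma>\<close> \<open>admissible \<sigma>'\<close> assms(9) _ that] by simp
  then show ?thesis
    using restrict_graph_perfect_matching_iff[OF pm(1)] restrict_graph_perfect_matching_iff[OF pm(2)]
      assms(9) by (auto simp: set_eq_iff)
qed

end
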